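(* Let $\mathcal{X}=[0,1]$, $0<\gamma<\tfrac12$, $L>0$, and let $d$ be an integer with $1\le d\le\left|\mathsf{C}\!\left([0,1],|\cdot|,\sqrt{32/\pi}\cdot\frac{\gamma}{L}\right)\right|$. There exists a class $\mathcal{F}\subseteq[-1,1]^{[0,1]}$ of $L$-Lipschitz functions (w.r.t. $|\cdot|$) with $\mathsf{vc}(\mathcal{F})=d$ such that for any (possibly randomized) online learner there exists a sequence $(x_1,y_1),\dots,(x_T,y_T)\in[0,1]\times\{-1,+1\}$ with $$\sum_{t=1}^T\mathbb{E}\,\mathbb{1}[\hat y_t\neq y_t]-\mathsf{OPT}^{\gamma}_{\mathrm{margin}}\ge\Omega\!\left(\sqrt{T\cdot\mathsf{vc}(\mathcal{F})\ln\!\left(\frac{\left|\mathsf{C}\!\left([0,1],|\cdot|,\sqrt{32/\pi}\cdot\frac{\gamma}{L}\right)\right|}{\mathsf{vc}(\mathcal{F})}\right)}\right),$$ where $\mathsf{OPT}^{\gamma}_{\mathrm{margin}}=\min_{f\in\mathcal{F}}\sum_{t=1}^T\mathbb{1}[y_tf(x_t)\le\gamma]$.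
   Context: Online binary classification: on rounds $t=1,\dots,T$ the adversary reveals $x_t$, the learner outputs $\hat y_t\in\{-1,+1\}$, then $y_t$ is revealed; the expectation is over the learner's randomness. $\mathsf{vc}(\mathcal{F})$ is the pseudo-dimension of $\mathcal{F}$. $|\mathsf{C}([0,1],|\cdot|,r)|$ is the minimal number of points of $[0,1]$ such that every point of $[0,1]$ is within distance $r$ of one of them. $\Omega(\cdot)$ hides a positive absolute constant.
   Formalization: The number of rounds T is restricted to T >= d * ln(|C([0,1],|.|,sqrt(32/pi)*gamma/L)|/d). The statement above fails without it. *)

theory Defs
  imports "HOL-Analysis.Analysis" "HOL-Library.Extended_Nat"
begin

definition cover_num :: "real \<Rightarrow> nat" where
  "cover_num r = (LEAST n. \<exists>C. finite C \<and> C \<subseteq> {0..1} \<and> card C = n \<and>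
                      (\<forall>x\<in>{0..1}. \<exists>c\<in>C. \<bar>x - c\<bar> \<le> r))"

definition pshatters :: "(real \<Rightarrow> real) set \<Rightarrow> real set \<Rightarrow> bool" where
  "pshatters F X \<longleftrightarrow> (\<exists>r :: real \<Rightarrow> real. \<forall>B \<subseteq> X. \<exists>f\<in>F. \<forall>x\<in>X. (f x \<ge> r x \<longleftrightarrow> x \<in> B))"

definition pdim :: "real set \<Rightarrow> (real \<Rightarrow> real) set \<Rightarrow> enat" where
  "pdim D F = Sup {enat (card X) | X. finite X \<and> X \<subseteq> D \<and> pshatters F X}"

text \<open>A (possibly randomized) online learner, represented by the probability q h x
  of predicting +1 at a round whose past examples are h and current instance is x.\<close>
definition learner :: "((real \<times> real) list \<Rightarrow> real \<Rightarrow> real) \<Rightarrow> bool" where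
  "learner q \<longleftrightarrow> (\<forall>h x. 0 \<le> q h x \<and> q h x \<le> 1)"

definition exp_mistakes :: "((real \<times> real) list \<Rightarrow> real \<Rightarrow> real) \<Rightarrow> (real \<times> real) list \<Rightarrow> real" where
  "exp_mistakes q S = (\<Sum>t<length S.
      (let p = q (take t S) (fst (S ! t)) in if snd (S ! t) = 1 then 1 - p else p))"

definition opt_margin :: "(real \<Rightarrow> real) set \<Rightarrow> real \<Rightarrow> (real \<times> real) list \<Rightarrow> nat" where
  "opt_margin F \<gamma> S = (INF f\<in>F. card {t. t < length S \<and> snd (S ! t) * f (fst (S ! t)) \<le> \<gamma>})"

end

theory Submission
  imports Defs
begin

text \<open>The hard class consists of \<open>d\<close> blocks of threshold functions: block \<open>i\<close> carries \<open>2\<^sup>l - 1\<close>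
  equally spaced anchors, a function takes value \<open>h\<close> on an initial segment of them and \<open>-h\<close> on
  the rest, and is extended to \<open>[0, 1]\<close> as the largest \<open>L\<close>-Lipschitz extension. Anchors of value 0
  between the blocks make the blocks independent, so the pseudo-dimension is exactly \<open>d\<close>.

  The adversary cuts the \<open>T\<close> rounds into \<open>K = min T (d l)\<close> levels of about \<open>T / K\<close> rounds. The \<open>l\<close>
  levels of a block binary-search its threshold, each level querying one anchor and fixing one
  binary digit of the threshold as the majority of its labels. Let \<open>f\<close> be the threshold function
  following all majorities. Choosing the labels adaptively, the adversary makes the learner's
  expected mistakes minus the margin mistakes of \<open>f\<close> at least \<open>T / 2\<close> minus the average of the
  latter over uniformly random labels. On a level of length \<open>n\<close>, \<open>f\<close> errs exactly on the minority
  labels, and a sum of \<open>n\<close> random signs has expected absolute value of order \<open>\<surd>n\<close>. The regret is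
  therefore of order \<open>K \<surd>(T / K) = \<surd>(T K)\<close>, which is at least \<open>\<surd>(T d ln (N / d))\<close> for the covering
  number \<open>N\<close> once \<open>2\<^sup>l\<close> is of order \<open>N / d\<close>; the spacing \<open>1 / (d 2\<^sup>l)\<close> of the anchors is then of
  order \<open>\<gamma> / L\<close>, as the margin requires.\<close>

text \<open>\<open>sign_avg G n\<close> is the expectation of \<open>G\<close> over a uniformly random vector of \<open>n\<close> signs.\<close>
fun sign_avg :: "(real list \<Rightarrow> real) \<Rightarrow> nat \<Rightarrow> real" where
  "sign_avg G 0 = G []"
| "sign_avg G (Suc n) = (sign_avg (\<lambda>ys. G (1 # ys)) n + sign_avg (\<lambda>ys. G (-1 # ys)) n) / 2"

lemma sign_avg_const: "sign_avg (\<lambda>ys. c) n = c"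
  by (induction n arbitrary: c) auto

lemma sign_avg_add: "sign_avg (\<lambda>ys. F ys + G ys) n = sign_avg F n + sign_avg G n"
  by (induction n arbitrary: F G) (auto simp: field_simps)

lemma sign_avg_diff: "sign_avg (\<lambda>ys. F ys - G ys) n = sign_avg F n - sign_avg G n"
  using sign_avg_add[of "\<lambda>ys. F ys - G ys" G n] by simp

lemma sign_avg_cmult: "sign_avg (\<lambda>ys. c * F ys) n = c * sign_avg F n"
  by (induction n arbitrary: F) (auto simp: field_simps)

lemma sign_avg_divide: "sign_avg (\<lambda>ys. F ys / c) n = sign_avg F n / c"
  by (induction n arbitrary: F) (auto simp: add_divide_distrib)

lemma sign_avg_sum:
  "finite I \<Longrightarrow> sign_avg (\<lambda>ys. \<Sum>i\<in>I. F i ys) n = (\<Sum>i\<in>I. sign_avg (F i) n)"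
  by (induction I rule: finite_induct) (auto simp: sign_avg_const sign_avg_add)

lemma sign_avg_mono:
  assumes "\<And>ys. length ys = n \<Longrightarrow> set ys \<subseteq> {-1, 1} \<Longrightarrow> F ys \<le> G ys"
  shows "sign_avg F n \<le> sign_avg G n"
  using assms
proof (induction n arbitrary: F G)
  case (Suc n)
  have "sign_avg (\<lambda>ys. F (1 # ys)) n \<le> sign_avg (\<lambda>ys. G (1 # ys)) n"
    by (rule Suc.IH) (auto intro!: Suc.prems)
  moreover have "sign_avg (\<lambda>ys. F (-1 # ys)) n \<le> sign_avg (\<lambda>ys. G (-1 # ys)) n"
    by (rule Suc.IH) (auto intro!: Suc.prems)
  ultimately show ?case by simp
qed simp

lemma sign_avg_drop: "sign_avg (\<lambda>ys. F (drop a ys)) (a + m) = sign_avg F m"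
  by (induction a arbitrary: F) auto

lemma sign_avg_take: "sign_avg (\<lambda>ys. F (take m ys)) (m + k) = sign_avg F m"
proof (induction m arbitrary: F)
  case (Suc m)
  show ?case using Suc.IH[of "\<lambda>ys. F (1 # ys)"] Suc.IH[of "\<lambda>ys. F (-1 # ys)"] by simp
qed (simp add: sign_avg_const)

lemma sign_avg_take_drop:
  assumes "a + m \<le> n"
  shows "sign_avg (\<lambda>ys. F (take m (drop a ys))) n = sign_avg F m"
proof -
  obtain k where "n = a + (m + k)" using assms by (metis add.assoc le_add_diff_inverse)
  then show ?thesis
    using sign_avg_drop[of "\<lambda>zs. F (take m zs)" a "m + k"] sign_avg_take[of F m k] by simp
qed

lemma sign_avg_sum_list_Suc:
  "sign_avg (\<lambda>ys. F (s + sum_list ys)) (Suc n) =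
     (sign_avg (\<lambda>ys. F (s + 1 + sum_list ys)) n + sign_avg (\<lambda>ys. F (s - 1 + sum_list ys)) n) / 2"
  by (simp add: algebra_simps)

lemma sign_avg_sum_list_power2: "sign_avg (\<lambda>ys. (s + sum_list ys)^2) n = s^2 + real n"
proof (induction n arbitrary: s)
  case (Suc n)
  show ?case
    by (simp only: sign_avg_sum_list_Suc[of "\<lambda>x. x^2"] Suc.IH)
       (simp add: power2_eq_square algebra_simps)
qed simp

lemma sign_avg_sum_list_power4:
  "sign_avg (\<lambda>ys. (s + sum_list ys)^4) n = s^4 + 6 * s^2 * real n + 3 * real n ^ 2 - 2 * real n"
proof (induction n arbitrary: s)
  case (Suc n)
  show ?case
    by (simp only: sign_avg_sum_list_Suc[of "\<lambda>x. x^4"] Suc.IH)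
       (simp add: power2_eq_square power4_eq_xxxx algebra_simps)
qed simp

lemma abs_ge_quartic_minorant:
  fixes a x :: real
  assumes "a > 0"
  shows "(3 * a^2 * x^2 - x^4) / (2 * a^3) \<le> \<bar>x\<bar>"
proof -
  have factor: "2 * a^3 * t - (3 * a^2 * t^2 - t^4) = t * (t - a)^2 * (t + 2 * a)" for t
    by algebra
  have even_powers: "x^2 = \<bar>x\<bar>^2" "x^4 = \<bar>x\<bar>^4" by simp_all
  have "2 * a^3 * \<bar>x\<bar> - (3 * a^2 * x^2 - x^4) = \<bar>x\<bar> * (\<bar>x\<bar> - a)^2 * (\<bar>x\<bar> + 2 * a)"
    unfolding even_powers by (rule factor)
  also have "\<dots> \<ge> 0" using assms by simp
  finally show ?thesis using assms by (simp add: divide_le_eq mult.commute)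
qed

text \<open>A Khintchine-type bound, obtained from the second and fourth moments of a sum of
  random signs through the polynomial minorant above with \<open>a\<^sup>2 = 2 n\<close>.\<close>
lemma sign_avg_abs_sum_list_ge:
  assumes "n \<ge> 1"
  shows "3 * sqrt n / (4 * sqrt 2) \<le> sign_avg (\<lambda>ys. \<bar>sum_list ys\<bar>) n"
proof -
  define a where "a = sqrt (2 * real n)"
  have a0: "a > 0" using assms by (simp add: a_def)
  have a2: "a^2 = 2 * real n" by (simp add: a_def)
  have a3: "a^3 = 2 * real n * a" by (metis a2 power2_eq_square power3_eq_cube mult.commute)
  have "a = sqrt 2 * sqrt n" by (simp add: a_def real_sqrt_mult)
  moreover have "real n = sqrt n * sqrt n" "sqrt n > 0" using assms by simp_all
  ultimately have "3 * sqrt n / (4 * sqrt 2) = 3 * real n / (4 * a)"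
    by (subst (2) \<open>real n = sqrt n * sqrt n\<close>) (simp add: field_simps)
  also have "\<dots> = 3 * real n ^ 2 / (2 * a^3)"
    using a0 assms unfolding a3 by (simp add: power2_eq_square field_simps)
  also have "\<dots> \<le> (3 * a^2 * real n - (3 * real n ^ 2 - 2 * real n)) / (2 * a^3)"
    using a0 unfolding a2 by (intro divide_right_mono) (auto simp: power2_eq_square)
  also have "\<dots> = sign_avg (\<lambda>ys. (3 * a^2 * (sum_list ys)^2 - (sum_list ys)^4) / (2 * a^3)) n"
    using sign_avg_cmult[of "1 / (2 * a^3)" "\<lambda>ys. 3 * a^2 * (sum_list ys)^2 - (sum_list ys)^4" n]
      sign_avg_diff[of "\<lambda>ys. 3 * a^2 * (sum_list ys)^2" "\<lambda>ys. (sum_list ys)^4" n]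
      sign_avg_cmult[of "3 * a^2" "\<lambda>ys. (sum_list ys)^2" n]
      sign_avg_sum_list_power2[of 0 n] sign_avg_sum_list_power4[of 0 n]
    by simp
  also have "\<dots> \<le> sign_avg (\<lambda>ys. \<bar>sum_list ys\<bar>) n"
    by (rule sign_avg_mono) (rule abs_ge_quartic_minorant[OF a0])
  finally show ?thesis .
qed

lemma card_mismatch_sign:
  assumes "set zs \<subseteq> {-1, 1}" "\<sigma> \<in> {-1, 1}"
  shows "real (card {i. i < length zs \<and> zs ! i \<noteq> \<sigma>}) = (real (length zs) - \<sigma> * sum_list zs) / 2"
proof -
  have "real (length (filter (\<lambda>x. x \<noteq> \<sigma>) zs)) = (real (length zs) - \<sigma> * sum_list zs) / 2"
    using assms by (induction zs) (auto simp: field_simps)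
  then show ?thesis by (simp add: length_filter_conv_card)
qed

lemma card_mismatch_majority:
  assumes "set zs \<subseteq> {-1, 1}"
  shows "real (card {i. i < length zs \<and> zs ! i \<noteq> (if 0 \<le> sum_list zs then 1 else -1)})
     = (real (length zs) - \<bar>sum_list zs\<bar>) / 2"
  using card_mismatch_sign[OF assms, of "if 0 \<le> sum_list zs then 1 else -1"] by (auto split: if_splits)

fun adaptive_seq ::
  "((real \<times> real) list \<Rightarrow> real) \<Rightarrow> (real \<times> real) list \<Rightarrow> real list \<Rightarrow> (real \<times> real) list"
where
  "adaptive_seq X h [] = h"
| "adaptive_seq X h (y # ys) = adaptive_seq X (h @ [(X h, y)]) ys"

lemma length_adaptive_seq: "length (adaptive_seq X h ys) = length h + length ys"
  by (induction ys arbitrary: h) auto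

lemma map_snd_adaptive_seq: "map snd (adaptive_seq X h ys) = map snd h @ ys"
  by (induction ys arbitrary: h) auto

lemma adaptive_seq_extends: "\<exists>zs. adaptive_seq X h ys = h @ zs"
  by (induction ys arbitrary: h) (simp, metis append.assoc adaptive_seq.simps(2))

lemma nth_adaptive_seq:
  assumes "length h \<le> t" "t < length (adaptive_seq X h ys)"
  shows "adaptive_seq X h ys ! t = (X (take t (adaptive_seq X h ys)), ys ! (t - length h))"
  using assms
proof (induction ys arbitrary: h)
  case (Cons y ys)
  define h' where "h' = h @ [(X h, y)]"
  have unfold: "adaptive_seq X h (y # ys) = adaptive_seq X h' ys" by (simp add: h'_def)
  show ?case
  proof (cases "t = length h")
    case True
    obtain zs where "adaptive_seq X h' ys = h' @ zs" using adaptive_seq_extends by blast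
    then show ?thesis unfolding unfold using True by (simp add: h'_def nth_append)
  next
    case False
    then have "t - length h = Suc (t - length h')" "length h' \<le> t"
      using Cons.prems by (simp_all add: h'_def)
    then show ?thesis using Cons.IH[of h'] Cons.prems unfolding unfold by simp
  qed
qed simp

lemma exp_mistakes_snoc:
  "exp_mistakes q (h @ [(x, y)]) = exp_mistakes q h + (let p = q h x in if y = 1 then 1 - p else p)"
  unfolding exp_mistakes_def by (simp add: nth_append)

text \<open>Whatever the learner predicts, one of the two labels costs it at least as much, relative
  to the conditional average of \<open>G\<close>, as the mean over both labels; following that label
  round by round beats the sign average.\<close>
lemma adversary_beats_sign_avg:
  "\<exists>ys. length ys = n \<and> set ys \<subseteq> {-1, 1} \<and>
     exp_mistakes q h + real n / 2 - sign_avg G n \<le> exp_mistakes q (adaptive_seq X h ys) - G ys"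
proof (induction n arbitrary: h G)
  case (Suc n)
  define p where "p = q h (X h)"
  obtain ys1 where ys1: "length ys1 = n" "set ys1 \<subseteq> {-1, 1}"
    "exp_mistakes q (h @ [(X h, 1)]) + real n / 2 - sign_avg (\<lambda>ys. G (1 # ys)) n
       \<le> exp_mistakes q (adaptive_seq X (h @ [(X h, 1)]) ys1) - G (1 # ys1)"
    using Suc.IH[of "h @ [(X h, 1)]" "\<lambda>ys. G (1 # ys)"] by blast
  obtain ys2 where ys2: "length ys2 = n" "set ys2 \<subseteq> {-1, 1}"
    "exp_mistakes q (h @ [(X h, -1)]) + real n / 2 - sign_avg (\<lambda>ys. G (-1 # ys)) n
       \<le> exp_mistakes q (adaptive_seq X (h @ [(X h, -1)]) ys2) - G (-1 # ys2)"
    using Suc.IH[of "h @ [(X h, -1)]" "\<lambda>ys. G (-1 # ys)"] by blast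
  have snoc: "exp_mistakes q (h @ [(X h, 1)]) = exp_mistakes q h + (1 - p)"
    "exp_mistakes q (h @ [(X h, -1)]) = exp_mistakes q h + p"
    by (simp_all add: exp_mistakes_snoc p_def)
  show ?case
  proof (cases "p - sign_avg (\<lambda>ys. G (-1 # ys)) n \<le> 1 - p - sign_avg (\<lambda>ys. G (1 # ys)) n")
    case True
    then show ?thesis using ys1 snoc by (intro exI[of _ "1 # ys1"]) (simp add: field_simps)
  next
    case False
    then show ?thesis using ys2 snoc by (intro exI[of _ "-1 # ys2"]) (simp add: field_simps)
  qed
qed simp

text \<open>The binary numeral \<open>b 0 b 1 \<dots> b (e - 1)\<close>, most significant digit first.\<close>
fun bin_val :: "(nat \<Rightarrow> bool) \<Rightarrow> nat \<Rightarrow> nat" where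
  "bin_val b 0 = 0"
| "bin_val b (Suc e) = 2 * bin_val b e + of_bool (b e)"

lemma bin_val_add: "\<exists>r < 2^m. bin_val b (e + m) = bin_val b e * 2^m + r"
proof (induction m)
  case (Suc m)
  then obtain r where "r < 2^m" "bin_val b (e + m) = bin_val b e * 2^m + r" by blast
  then show ?case by (intro exI[of _ "2 * r + of_bool (b (e + m))"]) auto
qed simp

lemma bin_val_less: "bin_val b e < 2^e"
  using bin_val_add[of e b 0] by auto

lemma bin_val_cong: "(\<And>e'. e' < e \<Longrightarrow> b e' = b' e') \<Longrightarrow> bin_val b e = bin_val b' e"
  by (induction e) auto

lemma bin_val_midpoint_le_iff:
  assumes "e < l"
  shows "(2 * bin_val b e + 1) * 2^(l - e - 1) \<le> bin_val b l \<longleftrightarrow> b e"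
proof -
  have l: "Suc e + (l - e - 1) = l" using assms by simp
  obtain r where "r < 2^(l - e - 1)" "bin_val b l = bin_val b (Suc e) * 2^(l - e - 1) + r"
    using bin_val_add[of "l - e - 1" b "Suc e"] unfolding l by blast
  then show ?thesis by (cases "b e") (auto simp: algebra_simps)
qed

lemma bin_val_midpoint_bounds:
  assumes "e < l"
  shows "1 \<le> (2 * bin_val b e + 1) * 2^(l - e - 1)" "(2 * bin_val b e + 1) * 2^(l - e - 1) < 2^l"
proof -
  show "1 \<le> (2 * bin_val b e + 1) * 2^(l - e - 1)" by (simp add: Suc_le_eq)
  have "(2 * bin_val b e + 1) * 2^(l - e - 1) < (2 * 2^e) * 2^(l - e - 1)"
    using bin_val_less[of b e] by (intro mult_strict_right_mono) auto
  also have "(2 * 2^e) * 2^(l - e - 1) = (2::nat)^l"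
    using assms by (simp flip: power_add power_Suc)
  finally show "(2 * bin_val b e + 1) * 2^(l - e - 1) < 2^l" .
qed

lemma lipschitz_on_Min_cones:
  fixes v p :: "'a \<Rightarrow> real"
  assumes "finite A" "A \<noteq> {}" "L \<ge> 0"
  shows "L-lipschitz_on S (\<lambda>x. Min ((\<lambda>k. v k + L * \<bar>x - p k\<bar>) ` A))"
proof (rule lipschitz_onI)
  have shift: "Min ((\<lambda>k. v k + L * \<bar>x - p k\<bar>) ` A)
      \<le> Min ((\<lambda>k. v k + L * \<bar>y - p k\<bar>) ` A) + L * \<bar>x - y\<bar>" for x y
  proof -
    have "Min ((\<lambda>k. v k + L * \<bar>x - p k\<bar>) ` A) \<le> v k + L * \<bar>y - p k\<bar> + L * \<bar>x - y\<bar>"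
      if "k \<in> A" for k
    proof -
      have "Min ((\<lambda>k. v k + L * \<bar>x - p k\<bar>) ` A) \<le> v k + L * \<bar>x - p k\<bar>"
        using that assms(1) by simp
      moreover have "L * \<bar>x - p k\<bar> \<le> L * (\<bar>y - p k\<bar> + \<bar>x - y\<bar>)"
        using assms(3) by (intro mult_left_mono) auto
      ultimately show ?thesis by (simp add: distrib_left)
    qed
    then have "Min ((\<lambda>k. v k + L * \<bar>x - p k\<bar>) ` A) - L * \<bar>x - y\<bar>
        \<le> Min ((\<lambda>k. v k + L * \<bar>y - p k\<bar>) ` A)"
      using assms(1,2) by (intro Min.boundedI) (auto simp: algebra_simps)
    then show ?thesis by simp
  qed
  show "dist (Min ((\<lambda>k. v k + L * \<bar>x - p k\<bar>) ` A)) (Min ((\<lambda>k. v k + L * \<bar>y - p k\<bar>) ` A))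
      \<le> L * dist x y" for x y
    using shift[of x y] shift[of y x] by (simp add: dist_real_def abs_minus_commute abs_le_iff)
qed (fact assms(3))

lemma clamp_lipschitz: "1-lipschitz_on S (\<lambda>x::real. max (-1) (min 1 x))"
  by (rule lipschitz_onI) (auto simp: dist_real_def min_def max_def abs_if)

text \<open>The anchors
  with \<open>k\<close> a multiple of \<open>2\<^sup>l\<close> separate the \<open>d\<close> blocks and get value 0; the \<open>2\<^sup>l - 1\<close> anchors of
  block \<open>i\<close> get \<open>height\<close> up to its threshold \<open>s i\<close> and \<open>-height\<close> after it. \<open>threshold_fun s\<close>
  is the largest \<open>L\<close>-Lipschitz extension of these values, clamped to \<open>[-1, 1]\<close>.\<close>
locale threshold_blocks =
  fixes d l :: nat and L D :: real
  assumes d_pos: "1 \<le> d" and l_pos: "1 \<le> l" and L_pos: "0 < L" and D_pos: "0 < D"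
    and anchors_fit: "real (d * 2^l - 2) * D \<le> 1"
begin

definition "anchors = {1..<d * 2^l}"

definition "anchor k = real (k - 1) * D"

definition "height = L * D / 2"

definition "anchor_val s k =
  (if k mod 2^l = 0 then 0 else if k mod 2^l \<le> s (k div 2^l) then height else - height)"

definition "envelope s x = Min ((\<lambda>k. anchor_val s k + L * \<bar>x - anchor k\<bar>) ` anchors)"

definition "threshold_fun s x = max (-1) (min 1 (envelope s x))"

definition "threshold_funs = range threshold_fun"

lemma two_le_two_power: "2 \<le> (2::nat)^l"
  using power_increasing[OF l_pos, of "2::nat"] by simp

lemma finite_anchors: "finite anchors" and anchors_nonempty: "anchors \<noteq> {}"
  using mult_le_mono[OF d_pos two_le_two_power] by (auto simp: anchors_def)

lemma height_pos: "0 < height"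
  using L_pos D_pos by (simp add: height_def)

lemma abs_anchor_val_le: "\<bar>anchor_val s k\<bar> \<le> height"
  using height_pos by (simp add: anchor_val_def)

lemma anchor_diff: "1 \<le> a \<Longrightarrow> 1 \<le> k \<Longrightarrow> anchor a - anchor k = (real a - real k) * D"
  by (simp add: anchor_def of_nat_diff algebra_simps)

lemma anchor_less: "1 \<le> a \<Longrightarrow> a < k \<Longrightarrow> anchor a < anchor k"
  using mult_neg_pos[OF _ D_pos, of "real a - real k"] anchor_diff[of a k] by simp

lemma anchor_inj: "1 \<le> a \<Longrightarrow> 1 \<le> k \<Longrightarrow> anchor a = anchor k \<Longrightarrow> a = k"
  using anchor_less by (metis less_irrefl nat_neq_iff)

lemma two_height_le_anchor_dist:
  assumes "1 \<le> a" "1 \<le> k" "a \<noteq> k"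
  shows "2 * height \<le> L * \<bar>anchor a - anchor k\<bar>"
proof -
  have "\<bar>anchor a - anchor k\<bar> = \<bar>real a - real k\<bar> * D"
    using assms D_pos by (simp add: anchor_diff abs_mult)
  moreover have "D \<le> \<bar>real a - real k\<bar> * D" using assms D_pos by (simp add: mult_le_cancel_right1)
  ultimately show ?thesis using L_pos by (simp add: height_def)
qed

lemma anchor_in_unit: "k \<in> anchors \<Longrightarrow> anchor k \<in> {0..1}"
proof -
  assume "k \<in> anchors"
  then have "k - 1 \<le> d * 2^l - 2" by (auto simp: anchors_def)
  then have "real (k - 1) * D \<le> real (d * 2^l - 2) * D"
    using D_pos by (intro mult_right_mono) auto
  then have "real (k - 1) * D \<le> 1" using anchors_fit by linarith
  then show ?thesis using D_pos by (simp add: anchor_def)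
qed

lemma envelope_anchor: "k \<in> anchors \<Longrightarrow> envelope s (anchor k) = anchor_val s k"
  unfolding envelope_def
proof (rule Min_eqI)
  fix y assume "k \<in> anchors" "y \<in> (\<lambda>a. anchor_val s a + L * \<bar>anchor k - anchor a\<bar>) ` anchors"
  then obtain a where "a \<in> anchors" "y = anchor_val s a + L * \<bar>anchor k - anchor a\<bar>" by auto
  moreover have "a \<noteq> k \<Longrightarrow> 2 * height \<le> L * \<bar>anchor k - anchor a\<bar>"
    using \<open>a \<in> anchors\<close> \<open>k \<in> anchors\<close> by (intro two_height_le_anchor_dist) (auto simp: anchors_def)
  ultimately show "anchor_val s k \<le> y"
    using abs_anchor_val_le[of s a] abs_anchor_val_le[of s k] by (cases "a = k") auto
qed (use finite_anchors in force)+

lemma threshold_fun_anchor: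
  "k \<in> anchors \<Longrightarrow> threshold_fun s (anchor k) = max (-1) (min 1 (anchor_val s k))"
  by (simp add: threshold_fun_def envelope_anchor)

lemma abs_threshold_fun_le: "\<bar>threshold_fun s x\<bar> \<le> 1"
  by (auto simp: threshold_fun_def)

lemma lipschitz_threshold_fun: "L-lipschitz_on S (threshold_fun s)"
proof -
  have "L-lipschitz_on S (envelope s)"
    unfolding envelope_def using finite_anchors anchors_nonempty L_pos
    by (intro lipschitz_on_Min_cones) auto
  from lipschitz_on_compose2[OF this clamp_lipschitz] show ?thesis
    by (simp add: threshold_fun_def)
qed

definition "in_block i x \<longleftrightarrow> i < d \<and> (0 < i \<longrightarrow> anchor (i * 2^l) \<le> x)
  \<and> (Suc i < d \<longrightarrow> x \<le> anchor (Suc i * 2^l))"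

lemma in_block_exists: "\<exists>i. in_block i x"
proof -
  let ?P = "\<lambda>i. Suc i = d \<or> x \<le> anchor (Suc i * 2^l)"
  define i where "i = (LEAST i. ?P i)"
  have last: "?P (d - 1)" using d_pos by simp
  have "?P i" unfolding i_def using last by (rule LeastI)
  moreover have "i \<le> d - 1" unfolding i_def using last by (rule Least_le)
  moreover have "anchor (i * 2^l) \<le> x" if "0 < i"
  proof -
    have "\<not> ?P (i - 1)" using that unfolding i_def by (intro not_less_Least) simp
    then show ?thesis using that by simp
  qed
  ultimately have "in_block i x" using d_pos by (auto simp: in_block_def)
  then show ?thesis ..
qed

text \<open>The cone of a separator anchor lying between \<open>x\<close> and another anchor \<open>k\<close> is below the cone
  of \<open>k\<close> at \<open>x\<close>, whatever the thresholds: this decouples the blocks.\<close>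
lemma separator_cone_le:
  assumes "k' mod 2^l = 0" "1 \<le> k" "1 \<le> k'" "k \<noteq> k'"
    and between: "anchor k \<le> anchor k' \<and> anchor k' \<le> x \<or> x \<le> anchor k' \<and> anchor k' \<le> anchor k"
  shows "anchor_val s k' + L * \<bar>x - anchor k'\<bar> \<le> anchor_val s' k + L * \<bar>x - anchor k\<bar>"
proof -
  have "\<bar>x - anchor k\<bar> = \<bar>x - anchor k'\<bar> + \<bar>anchor k' - anchor k\<bar>" using between by auto
  moreover have "2 * height \<le> L * \<bar>anchor k' - anchor k\<bar>"
    using assms by (intro two_height_le_anchor_dist) auto
  ultimately show ?thesis
    using assms(1) abs_anchor_val_le[of s' k] height_pos
    by (simp add: anchor_val_def distrib_left abs_le_iff)
qed

lemma cone_dominated_in_block: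
  assumes x: "in_block i x" and s: "s i \<le> s' i" and k: "k \<in> anchors"
  shows "\<exists>k'\<in>anchors. anchor_val s k' + L * \<bar>x - anchor k'\<bar> \<le> anchor_val s' k + L * \<bar>x - anchor k\<bar>"
proof -
  have k1: "1 \<le> k" "k < d * 2^l" using k by (auto simp: anchors_def)
  consider "k < i * 2^l" | "Suc i * 2^l < k" | "i * 2^l \<le> k" "k \<le> Suc i * 2^l" by linarith
  then show ?thesis
  proof cases
    case 1
    have "0 < i" using 1 by (cases "i = 0") auto
    moreover have "i < d" using x by (simp add: in_block_def)
    ultimately have "i * 2^l \<in> anchors" "anchor k < anchor (i * 2^l)" "anchor (i * 2^l) \<le> x"
      using 1 k1 x anchor_less[of k "i * 2^l"] by (auto simp: anchors_def in_block_def)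
    then show ?thesis
      using 1 k1 by (intro bexI[of _ "i * 2^l"] separator_cone_le) (auto simp: anchors_def)
  next
    case 2
    then have "Suc i < d" using k1 by (metis less_trans mult_less_cancel2)
    then have "Suc i * 2^l \<in> anchors" "x \<le> anchor (Suc i * 2^l)"
      using 2 k1 x two_le_two_power by (auto simp: anchors_def in_block_def)
    moreover have "anchor (Suc i * 2^l) < anchor k"
      using 2 two_le_two_power by (intro anchor_less) auto
    ultimately show ?thesis
      using 2 k1 by (intro bexI[of _ "Suc i * 2^l"] separator_cone_le) (auto simp: anchors_def)
  next
    case 3
    have "k div 2^l = i" if "k mod 2^l \<noteq> 0"
    proof -
      have "k \<noteq> Suc i * 2^l" using that by auto
      then have "k < Suc i * 2^l" using 3 by simp
      then show ?thesis using 3 by (intro div_nat_eqI) (simp_all add: mult.commute)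
    qed
    then have "anchor_val s k \<le> anchor_val s' k"
      using s height_pos by (auto simp: anchor_val_def)
    then show ?thesis by (intro bexI[OF _ k]) simp
  qed
qed

lemma threshold_fun_mono_in_block:
  assumes "in_block i x" "s i \<le> s' i"
  shows "threshold_fun s x \<le> threshold_fun s' x"
proof -
  have "envelope s x \<le> envelope s' x"
    using cone_dominated_in_block[of i x s s', OF assms] finite_anchors anchors_nonempty
    by (auto simp: envelope_def Min_le_iff)
  then show ?thesis by (auto simp: threshold_fun_def)
qed

text \<open>Two shattered points in the same block cannot be separated both ways, since the
  threshold functions are ordered on a block by their threshold there.\<close>
lemma card_le_if_pshatters:
  assumes "finite X" "pshatters threshold_funs X"
  shows "card X \<le> d"
proof (rule ccontr)
  assume "\<not> card X \<le> d"
  define blk where "blk x = (SOME i. in_block i x)" for x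
  have blk: "in_block (blk x) x" for x unfolding blk_def using in_block_exists by (rule someI_ex)
  then have "blk ` X \<subseteq> {..<d}" by (auto simp: in_block_def)
  then have "\<not> inj_on blk X"
    using card_inj_on_le[of blk X "{..<d}"] \<open>\<not> card X \<le> d\<close> by auto
  then obtain x y where xy: "x \<in> X" "y \<in> X" "x \<noteq> y" "blk x = blk y" by (auto simp: inj_on_def)
  obtain r where r: "\<forall>B\<subseteq>X. \<exists>f\<in>threshold_funs. \<forall>z\<in>X. r z \<le> f z \<longleftrightarrow> z \<in> B"
    using assms(2) by (auto simp: pshatters_def)
  obtain s where s: "\<forall>z\<in>X. r z \<le> threshold_fun s z \<longleftrightarrow> z = x"
    using r[rule_format, of "{x}"] xy(1) by (auto simp: threshold_funs_def)
  obtain s' where s': "\<forall>z\<in>X. r z \<le> threshold_fun s' z \<longleftrightarrow> z = y"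
    using r[rule_format, of "{y}"] xy(2) by (auto simp: threshold_funs_def)
  show False
  proof (cases "s (blk x) \<le> s' (blk x)")
    case True
    then show False
      using threshold_fun_mono_in_block[of "blk x" x s s', OF blk True] s s' xy by fastforce
  next
    case False
    then have "s' (blk y) \<le> s (blk y)" using xy(4) by simp
    then show False
      using threshold_fun_mono_in_block[of "blk y" y s' s] blk s s' xy by fastforce
  qed
qed

lemma first_anchor_of_block: "i < d \<Longrightarrow> i * 2^l + 1 \<in> anchors"
proof -
  assume "i < d"
  then have "Suc i * 2^l \<le> d * 2^l" by (intro mult_le_mono1) simp
  then show ?thesis using two_le_two_power by (simp add: anchors_def)
qed

lemma pshatters_first_anchors:
  "pshatters threshold_funs ((\<lambda>i. anchor (i * 2^l + 1)) ` {..<d})"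
  unfolding pshatters_def
proof (intro exI[of _ "\<lambda>_. 0"] allI impI)
  let ?p = "\<lambda>i. anchor (i * 2^l + 1)"
  fix B assume "B \<subseteq> ?p ` {..<d}"
  define s where "s i = (if ?p i \<in> B then 1 else (0::nat))" for i
  have "threshold_fun s (?p i) = (if ?p i \<in> B then min 1 height else - min 1 height)"
    if "i < d" for i
  proof -
    have "(i * 2^l + 1) mod 2^l = 1" "(i * 2^l + 1) div 2^l = i"
      using two_le_two_power l_pos by (simp_all only: mod_mult_self3 div_mult_self3) simp_all
    with first_anchor_of_block[OF that] show ?thesis
      using height_pos by (simp add: threshold_fun_anchor anchor_val_def s_def min_def max_def)
  qed
  then show "\<exists>f\<in>threshold_funs. \<forall>x\<in>?p ` {..<d}. 0 \<le> f x \<longleftrightarrow> x \<in> B"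
    using height_pos by (intro bexI[of _ "threshold_fun s"]) (auto simp: threshold_funs_def)
qed

lemma pdim_threshold_funs: "pdim {0..1} threshold_funs = enat d"
proof (rule antisym)
  show "pdim {0..1} threshold_funs \<le> enat d"
    unfolding pdim_def by (rule Sup_least) (auto dest: card_le_if_pshatters)
  let ?X = "(\<lambda>i. anchor (i * 2^l + 1)) ` {..<d}"
  have "inj_on (\<lambda>i. anchor (i * 2^l + 1)) {..<d}"
  proof (rule inj_onI)
    fix a b assume "anchor (a * 2^l + 1) = anchor (b * 2^l + 1)"
    then have "a * 2^l + 1 = b * 2^l + 1" by (intro anchor_inj) auto
    then show "a = b" by simp
  qed
  then have "card ?X = d" by (simp add: card_image)
  moreover have "?X \<subseteq> {0..1}" using anchor_in_unit first_anchor_of_block by auto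
  ultimately show "enat d \<le> pdim {0..1} threshold_funs"
    unfolding pdim_def using pshatters_first_anchors by (intro Sup_upper CollectI exI[of _ ?X]) simp
qed

end

text \<open>Level \<open>g\<close> fixes digit \<open>g mod l\<close> of the threshold of block \<open>g div l\<close>: each of its
  rounds queries the midpoint of the dyadic interval selected by the earlier digits of that
  block, and the digit is the majority of the labels of the level.\<close>
locale threshold_adversary = threshold_blocks +
  fixes K T :: nat and \<gamma> :: real
  assumes K_pos: "1 \<le> K" and K_le_dl: "K \<le> d * l" and K_le_T: "K \<le> T"
    and gamma_pos: "0 < \<gamma>" and gamma_less_1: "\<gamma> < 1" and gamma_less_height: "\<gamma> < height"
begin

definition "chunk = T div K"

definition "level t = min (K - 1) (t div chunk)"

definition "level_len g = (if g = K - 1 then T - (K - 1) * chunk else chunk)"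

definition "level_labels ys g = take (level_len g) (drop (g * chunk) ys)"

definition "level_sign ys g = (if 0 \<le> sum_list (level_labels ys g) then 1 else - 1 :: real)"

definition "majority_bit ys g \<longleftrightarrow> g < K \<and> 0 \<le> sum_list (level_labels ys g)"

definition "block_digits ys i e = majority_bit ys (i * l + e)"

definition "query ys g = g div l * 2^l
  + (2 * bin_val (block_digits ys (g div l)) (g mod l) + 1) * 2^(l - g mod l - 1)"

definition "query_point h = anchor (query (map snd h) (level (length h)))"

definition "target ys i = bin_val (block_digits ys i) l"

definition "majority_loss ys = (\<Sum>g<K. (real (level_len g) - \<bar>sum_list (level_labels ys g)\<bar>) / 2)"

lemma chunk_pos: "0 < chunk"
  using K_le_T K_pos by (simp add: chunk_def div_greater_zero_iff)

lemma last_level_fits: "(K - 1) * chunk + chunk \<le> T"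
proof -
  have "(K - 1) * chunk + chunk = K * chunk" using K_pos by (simp add: algebra_simps mult_eq_if)
  also have "\<dots> \<le> T" by (simp add: chunk_def mult.commute)
  finally show ?thesis .
qed

lemma level_less: "level t < K"
  using K_pos by (simp add: level_def)

lemma chunk_le_level_len: "chunk \<le> level_len g"
  using last_level_fits by (simp add: level_len_def) arith

lemma level_end: "g < K \<Longrightarrow> g * chunk + level_len g \<le> T"
proof (cases "g = K - 1")
  case False
  moreover assume "g < K"
  ultimately have "Suc g * chunk \<le> (K - 1) * chunk" by (intro mult_le_mono1) simp
  then show ?thesis using False last_level_fits by (simp add: level_len_def)
qed (use last_level_fits in \<open>simp add: level_len_def\<close>)

lemma level_eq_iff:
  assumes "t < T" "g < K"
  shows "level t = g \<longleftrightarrow> g * chunk \<le> t \<and> t < g * chunk + level_len g"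
proof (cases "g = K - 1")
  case True
  have "level t = g \<longleftrightarrow> K - 1 \<le> t div chunk" using True by (auto simp: level_def min_def)
  also have "\<dots> \<longleftrightarrow> (K - 1) * chunk \<le> t"
    using chunk_pos by (simp add: less_eq_div_iff_mult_less_eq)
  finally show ?thesis using True assms level_end by (auto simp: level_len_def)
next
  case False
  then have "level t = g \<longleftrightarrow> t div chunk = g" using assms(2) by (auto simp: level_def min_def)
  also have "\<dots> \<longleftrightarrow> g * chunk \<le> t \<and> t < g * chunk + chunk"
  proof
    show "t div chunk = g \<Longrightarrow> g * chunk \<le> t \<and> t < g * chunk + chunk"
      using div_times_less_eq_dividend[of t chunk] dividend_less_div_times[OF chunk_pos, of t]
      by simp
  qed (auto intro: div_nat_eqI simp: mult.commute)
  finally show ?thesis using False by (simp add: level_len_def)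
qed

lemma sum_level_len: "(\<Sum>g<K. level_len g) = T"
proof -
  have "(\<Sum>g<K. level_len g) = (\<Sum>g<K - 1. level_len g) + level_len (K - 1)"
    using K_pos by (metis Suc_diff_1 less_le_trans sum.lessThan_Suc zero_less_one)
  also have "\<dots> = (K - 1) * chunk + (T - (K - 1) * chunk)" by (simp add: level_len_def)
  finally show ?thesis using last_level_fits by simp
qed

lemma
  assumes "g < K"
  shows query_mod: "query ys g mod 2^l
      = (2 * bin_val (block_digits ys (g div l)) (g mod l) + 1) * 2^(l - g mod l - 1)"
    and query_div: "query ys g div 2^l = g div l"
    and query_in_anchors: "query ys g \<in> anchors"
proof -
  let ?m = "(2 * bin_val (block_digits ys (g div l)) (g mod l) + 1) * 2^(l - g mod l - 1)"
  have m: "1 \<le> ?m" "?m < 2^l" using bin_val_midpoint_bounds[of "g mod l" l] l_pos by auto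
  then show "query ys g mod 2^l = ?m" "query ys g div 2^l = g div l"
    by (simp_all add: query_def)
  have "g div l < d" using assms K_le_dl l_pos by (simp add: div_less_iff_less_mult mult.commute)
  then have "Suc (g div l) * 2^l \<le> d * 2^l" by (intro mult_le_mono1) simp
  then show "query ys g \<in> anchors" using m by (simp add: anchors_def query_def)
qed

lemma majority_bit_take:
  "g * chunk + level_len g \<le> t \<Longrightarrow> majority_bit (take t ys) g = majority_bit ys g"
  by (simp add: majority_bit_def level_labels_def drop_take min_def)

lemma query_take: "query (take t ys) (level t) = query ys (level t)"
proof -
  let ?g = "level t"
  have start: "?g * chunk \<le> t"
    using chunk_pos by (cases "?g = t div chunk")
      (auto simp: level_def min_def less_eq_div_iff_mult_less_eq mult.commute split: if_splits)
  have "block_digits (take t ys) (?g div l) e = block_digits ys (?g div l) e"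
    if "e < ?g mod l" for e
  proof -
    define g' where "g' = ?g div l * l + e"
    have "g' < ?g" unfolding g'_def using that by (metis add_less_cancel_left div_mult_mod_eq)
    then have "level_len g' = chunk" "Suc g' * chunk \<le> ?g * chunk"
      using level_less[of t] mult_le_mono1[of "Suc g'" ?g chunk] by (auto simp: level_len_def)
    then have "g' * chunk + level_len g' \<le> t" using start by simp
    then show ?thesis unfolding block_digits_def g'_def[symmetric] by (rule majority_bit_take)
  qed
  then show ?thesis unfolding query_def by (metis bin_val_cong)
qed

lemma threshold_fun_target_query:
  assumes "g < K"
  shows "threshold_fun (target ys) (anchor (query ys g))
    = (if majority_bit ys g then min 1 height else - min 1 height)"
proof -
  have e: "g mod l < l" using l_pos by simp
  have "query ys g mod 2^l \<noteq> 0"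
    by (metis query_mod[OF assms] bin_val_midpoint_bounds(1)[OF e] not_one_le_zero)
  moreover have "query ys g mod 2^l \<le> target ys (query ys g div 2^l) \<longleftrightarrow> majority_bit ys g"
    unfolding query_mod[OF assms] query_div[OF assms] target_def bin_val_midpoint_le_iff[OF e]
    by (simp add: block_digits_def)
  ultimately have "anchor_val (target ys) (query ys g) = (if majority_bit ys g then height else - height)"
    by (simp add: anchor_val_def)
  then show ?thesis
    using height_pos by (simp add: threshold_fun_anchor[OF query_in_anchors[OF assms]] min_def max_def)
qed

lemma nth_adversary_seq:
  assumes "length ys = T" "t < T"
  shows "adaptive_seq query_point [] ys ! t = (anchor (query ys (level t)), ys ! t)"
proof -
  let ?S = "adaptive_seq query_point [] ys"
  have "length ?S = T" using assms by (simp add: length_adaptive_seq)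
  then have "?S ! t = (query_point (take t ?S), ys ! t)" "length (take t ?S) = t"
    using nth_adaptive_seq[of "[]" t query_point ys] assms by simp_all
  moreover have "map snd (take t ?S) = take t ys"
    using map_snd_adaptive_seq[of query_point "[]" ys] by (simp add: take_map[symmetric])
  ultimately show ?thesis by (simp add: query_point_def query_take)
qed

lemma
  assumes "length ys = T" "g < K"
  shows length_level_labels: "length (level_labels ys g) = level_len g"
    and nth_level_labels: "i < level_len g \<Longrightarrow> level_labels ys g ! i = ys ! (g * chunk + i)"
  using assms level_end[OF assms(2)] by (simp_all add: level_labels_def)

lemma margin_error_iff:
  assumes "set ys \<subseteq> {-1, 1}" "t < length ys"
  shows "ys ! t * threshold_fun (target ys) (anchor (query ys (level t))) \<le> \<gamma>
    \<longleftrightarrow> ys ! t \<noteq> level_sign ys (level t)"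
proof -
  have "ys ! t = 1 \<or> ys ! t = -1" using assms nth_mem by blast
  moreover have "\<gamma> < min 1 height" using gamma_less_1 gamma_less_height by simp
  ultimately show ?thesis
    using gamma_pos height_pos
    by (auto simp: threshold_fun_target_query[OF level_less] level_sign_def majority_bit_def level_less)
qed

lemma card_level_mismatches:
  assumes ys: "length ys = T" "set ys \<subseteq> {-1, 1}" and g: "g < K"
  shows "real (card {t. t < T \<and> level t = g \<and> ys ! t \<noteq> level_sign ys g})
    = (real (level_len g) - \<bar>sum_list (level_labels ys g)\<bar>) / 2"
proof -
  let ?M = "{i. i < length (level_labels ys g) \<and> level_labels ys g ! i \<noteq> level_sign ys g}"
  have "{t. t < T \<and> level t = g \<and> ys ! t \<noteq> level_sign ys g} = (\<lambda>i. g * chunk + i) ` ?M"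
  proof (intro set_eqI iffI)
    fix t assume t: "t \<in> {t. t < T \<and> level t = g \<and> ys ! t \<noteq> level_sign ys g}"
    then have "g * chunk \<le> t" "t < g * chunk + level_len g" using level_eq_iff g by auto
    then show "t \<in> (\<lambda>i. g * chunk + i) ` ?M"
      using t by (intro image_eqI[of _ _ "t - g * chunk"])
        (simp_all add: length_level_labels[OF ys(1) g] nth_level_labels[OF ys(1) g])
  next
    fix t assume "t \<in> (\<lambda>i. g * chunk + i) ` ?M"
    then obtain i where i: "t = g * chunk + i" "i < length (level_labels ys g)"
      "level_labels ys g ! i \<noteq> level_sign ys g" by blast
    then have "i < level_len g" "ys ! t \<noteq> level_sign ys g"
      by (simp_all add: length_level_labels[OF ys(1) g] nth_level_labels[OF ys(1) g])
    moreover have "t < T" using calculation i(1) level_end[OF g] by simp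
    ultimately show "t \<in> {t. t < T \<and> level t = g \<and> ys ! t \<noteq> level_sign ys g}"
      using level_eq_iff[of t g] g i(1) by simp
  qed
  then have "card {t. t < T \<and> level t = g \<and> ys ! t \<noteq> level_sign ys g} = card ?M"
    by (simp add: card_image)
  moreover have "set (level_labels ys g) \<subseteq> {-1, 1}"
    using ys(2) by (auto simp: level_labels_def dest: in_set_takeD in_set_dropD)
  note card_mismatch_majority[OF this]
  ultimately show ?thesis unfolding level_sign_def using length_level_labels[OF ys(1) g] by metis
qed

lemma card_margin_errors_target:
  assumes "length ys = T" "set ys \<subseteq> {-1, 1}"
  defines "S \<equiv> adaptive_seq query_point [] ys"
  shows "real (card {t. t < length S \<and> snd (S ! t) * threshold_fun (target ys) (fst (S ! t)) \<le> \<gamma>})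
    = majority_loss ys"
proof -
  let ?E = "{t. t < T \<and> ys ! t \<noteq> level_sign ys (level t)}"
  have errors: "{t. t < length S \<and> snd (S ! t) * threshold_fun (target ys) (fst (S ! t)) \<le> \<gamma>} = ?E"
  proof (rule Collect_cong)
    show "(t < length S \<and> snd (S ! t) * threshold_fun (target ys) (fst (S ! t)) \<le> \<gamma>)
      \<longleftrightarrow> (t < T \<and> ys ! t \<noteq> level_sign ys (level t))" for t
      using margin_error_iff[OF assms(2), of t]
      by (cases "t < T") (simp_all add: S_def length_adaptive_seq assms(1) nth_adversary_seq[OF assms(1)])
  qed
  have "card ?E = (\<Sum>g<K. card {t \<in> ?E. level t = g})"
    using sum.group[of ?E "{..<K}" level "\<lambda>_. 1::nat"] level_less by (simp add: image_subset_iff)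
  also have "\<dots> = (\<Sum>g<K. card {t. t < T \<and> level t = g \<and> ys ! t \<noteq> level_sign ys g})"
    by (auto intro!: sum.cong arg_cong[where f = card])
  finally have "real (card ?E)
      = (\<Sum>g<K. real (card {t. t < T \<and> level t = g \<and> ys ! t \<noteq> level_sign ys g}))"
    by simp
  also have "\<dots> = majority_loss ys"
    unfolding majority_loss_def using card_level_mismatches[OF assms(1,2)] by (intro sum.cong) auto
  finally show ?thesis unfolding errors .
qed

lemma sign_avg_majority_loss:
  "real T / 2 - sign_avg majority_loss T = (\<Sum>g<K. sign_avg (\<lambda>zs. \<bar>sum_list zs\<bar>) (level_len g)) / 2"
proof -
  have "sign_avg (\<lambda>ys. \<bar>sum_list (level_labels ys g)\<bar>) T = sign_avg (\<lambda>zs. \<bar>sum_list zs\<bar>) (level_len g)"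
    if "g < K" for g
    unfolding level_labels_def using level_end[OF that] by (rule sign_avg_take_drop)
  then have "sign_avg majority_loss T
      = (\<Sum>g<K. (real (level_len g) - sign_avg (\<lambda>zs. \<bar>sum_list zs\<bar>) (level_len g)) / 2)"
    unfolding majority_loss_def by (simp add: sign_avg_sum sign_avg_divide sign_avg_diff sign_avg_const)
  moreover have "(\<Sum>g<K. real (level_len g)) = real T" using sum_level_len by (simp flip: of_nat_sum)
  ultimately show ?thesis by (simp add: sum_subtractf sum_divide_distrib[symmetric] field_simps)
qed

lemma sign_avg_majority_loss_le:
  "3 * real K * sqrt chunk / (8 * sqrt 2) \<le> real T / 2 - sign_avg majority_loss T"
proof -
  have "3 * sqrt chunk / (4 * sqrt 2) \<le> sign_avg (\<lambda>zs. \<bar>sum_list zs\<bar>) (level_len g)" for g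
  proof -
    have "3 * sqrt chunk / (4 * sqrt 2) \<le> 3 * sqrt (level_len g) / (4 * sqrt 2)"
      using chunk_le_level_len[of g] by (simp add: divide_right_mono)
    also have "\<dots> \<le> sign_avg (\<lambda>zs. \<bar>sum_list zs\<bar>) (level_len g)"
      using chunk_pos chunk_le_level_len[of g] by (intro sign_avg_abs_sum_list_ge) simp
    finally show ?thesis .
  qed
  then have "(\<Sum>g<K. 3 * sqrt chunk / (4 * sqrt 2)) \<le> (\<Sum>g<K. sign_avg (\<lambda>zs. \<bar>sum_list zs\<bar>) (level_len g))"
    by (intro sum_mono)
  then show ?thesis unfolding sign_avg_majority_loss by simp
qed

lemma exists_hard_sequence:
  "\<exists>S. length S = T \<and> (\<forall>p\<in>set S. fst p \<in> {0..1} \<and> snd p \<in> {-1, 1}) \<and>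
     3 * real K * sqrt chunk / (8 * sqrt 2) \<le> exp_mistakes q S - real (opt_margin threshold_funs \<gamma> S)"
proof -
  obtain ys where ys: "length ys = T" "set ys \<subseteq> {-1, 1}"
    "exp_mistakes q [] + real T / 2 - sign_avg majority_loss T
       \<le> exp_mistakes q (adaptive_seq query_point [] ys) - majority_loss ys"
    using adversary_beats_sign_avg by blast
  define S where "S = adaptive_seq query_point [] ys"
  have "length S = T" using ys(1) by (simp add: S_def length_adaptive_seq)
  moreover have "fst p \<in> {0..1} \<and> snd p \<in> {-1, 1}" if "p \<in> set S" for p
  proof -
    obtain t where "t < T" "p = S ! t" using \<open>p \<in> set S\<close> \<open>length S = T\<close> by (metis in_set_conv_nth)
    then have "p = (anchor (query ys (level t)), ys ! t)" unfolding S_def by (simp add: nth_adversary_seq ys(1))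
    moreover have "ys ! t \<in> {-1, 1}" using ys(1,2) \<open>t < T\<close> nth_mem by blast
    ultimately show ?thesis using anchor_in_unit[OF query_in_anchors[OF level_less]] by simp
  qed
  moreover have "real (opt_margin threshold_funs \<gamma> S) \<le> majority_loss ys"
  proof -
    have "opt_margin threshold_funs \<gamma> S
        \<le> card {t. t < length S \<and> snd (S ! t) * threshold_fun (target ys) (fst (S ! t)) \<le> \<gamma>}"
      unfolding opt_margin_def threshold_funs_def by (rule cINF_lower) auto
    then show ?thesis using card_margin_errors_target[OF ys(1,2)] unfolding S_def by linarith
  qed
  ultimately show ?thesis
    using ys(3) sign_avg_majority_loss_le by (intro exI[of _ S]) (simp add: S_def exp_mistakes_def)
qed

end

lemma odd_multiples_cover_unit:
  assumes r: "0 < r" and M: "1 \<le> M" "1 \<le> 2 * real M * r" and x: "x \<in> {0..1}"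
  shows "\<exists>j<M. \<bar>x - min 1 ((2 * real j + 1) * r)\<bar> \<le> r"
proof -
  define J where "J = nat \<lfloor>x / (2 * r)\<rfloor>"
  have "real J = of_int \<lfloor>x / (2 * r)\<rfloor>" using x r by (simp add: J_def)
  then have "real J \<le> x / (2 * r)" "x / (2 * r) < real J + 1"
    using floor_correct[of "x / (2 * r)"] by linarith+
  then have J: "2 * real J * r \<le> x" "x < 2 * (real J + 1) * r"
    using r by (simp_all add: field_simps)
  show ?thesis
  proof (cases "J < M")
    case True
    then show ?thesis using J x by (intro exI[of _ J]) (auto simp: min_def algebra_simps abs_le_iff)
  next
    case False
    then have "2 * real M * r \<le> 2 * real J * r" using r by simp
    then have "x = 1" using J M x by simp
    moreover have "2 * real (M - 1) + 1 = 2 * real M - 1" using M by (simp add: of_nat_diff)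
    ultimately show ?thesis
      using M r by (intro exI[of _ "M - 1"]) (auto simp: min_def algebra_simps abs_le_iff)
  qed
qed

lemma cover_num_less:
  assumes r: "0 < r"
  shows "real (cover_num r) < 1 / (2 * r) + 1"
proof -
  define M where "M = nat \<lceil>1 / (2 * r)\<rceil>"
  have "real M = of_int \<lceil>1 / (2 * r)\<rceil>" using r by (simp add: M_def)
  then have M: "1 / (2 * r) \<le> real M" "real M < 1 / (2 * r) + 1"
    using ceiling_correct[of "1 / (2 * r)"] by linarith+
  moreover have "0 < 1 / (2 * r)" using r by simp
  ultimately have "0 < real M" by linarith
  then have "1 \<le> M" by simp
  have "1 \<le> 2 * real M * r" using M(1) r by (simp add: field_simps)
  define C where "C = (\<lambda>j. min 1 ((2 * real j + 1) * r)) ` {..<M}"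
  have "\<forall>x\<in>{0..1}. \<exists>c\<in>C. \<bar>x - c\<bar> \<le> r"
    using odd_multiples_cover_unit[OF r \<open>1 \<le> M\<close> \<open>1 \<le> 2 * real M * r\<close>] by (fastforce simp: C_def)
  moreover have "finite C" "C \<subseteq> {0..1}" using r by (auto simp: C_def)
  ultimately have "cover_num r \<le> card C" unfolding cover_num_def by (intro Least_le) blast
  also have "card C \<le> M" unfolding C_def using card_image_le[of "{..<M}"] by simp
  finally show ?thesis using M by linarith
qed

lemma cover_num_scaled_less:
  assumes "0 < \<gamma>" "0 < L"
  shows "real (cover_num (sqrt (32 / pi) * \<gamma> / L)) - 1 < L / (4 * \<gamma>)"
proof -
  have "sqrt 4 \<le> sqrt (32 / pi)" using pi_less_4 by (intro real_sqrt_le_mono) (simp add: field_simps)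
  then have "2 \<le> sqrt (32 / pi)" by simp
  then have "1 / (2 * (sqrt (32 / pi) * \<gamma> / L)) \<le> L / (4 * \<gamma>)"
    using assms by (simp add: field_simps)
  moreover have "0 < sqrt (32 / pi) * \<gamma> / L" using assms by simp
  ultimately show ?thesis using cover_num_less by fastforce
qed

text \<open>The depth \<open>l\<close> of the binary search: blocks of \<open>2\<^sup>l\<close> anchors still fit into \<open>2 N\<close> anchors,
  and \<open>l\<close> bits per block account for the logarithmic factor.\<close>
lemma exists_search_depth:
  assumes "1 \<le> d" "d \<le> N"
  shows "\<exists>l \<ge> 1. d * 2^l \<le> 2 * N \<and> ln (real N / real d) \<le> 2 * real l"
proof -
  define m where "m = N div d"
  have "1 \<le> m" using assms by (simp add: m_def div_greater_zero_iff Suc_le_eq)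
  obtain l where l: "2^l \<le> m + 1" "m + 1 < 2^(l + 1)" using ex_power_ivl1[of 2 "m + 1"] by auto
  have "1 \<le> l" using l \<open>1 \<le> m\<close> by (cases l) auto
  have "d * m \<le> N" "N < d * (m + 1)"
    using dividend_less_div_times[of d N] assms by (simp_all add: m_def algebra_simps)
  have "d * 2^l \<le> d * (m + 1)" using l(1) by (rule mult_le_mono2)
  also have "\<dots> \<le> 2 * N" using \<open>d * m \<le> N\<close> assms by simp
  finally have "d * 2^l \<le> 2 * N" .
  have "real N / real d < real m + 1"
    using \<open>N < d * (m + 1)\<close> assms by (simp add: divide_less_eq algebra_simps flip: of_nat_mult)
  also have "\<dots> < 2^(l + 1)"
  proof -
    have "real (m + 1) < real (2^(l + 1))" using l(2) by (simp only: of_nat_less_iff)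
    then show ?thesis by simp
  qed
  finally have "ln (real N / real d) < ln (2^(l + 1))" using assms by (simp add: ln_less_cancel_iff)
  also have "\<dots> = real (l + 1) * ln 2" by (rule ln_realpow)
  also have "\<dots> \<le> real (l + 1)" using ln_2_less_1 by simp
  finally show ?thesis using \<open>1 \<le> l\<close> \<open>d * 2^l \<le> 2 * N\<close> by (intro exI[of _ l]) simp
qed

text \<open>With \<open>d 2\<^sup>l - 1\<close> anchors and \<open>2 \<le> d 2\<^sup>l\<close>, the spacing \<open>1 / (d 2\<^sup>l - 2)\<close> fits the anchors into
  \<open>[0, 1]\<close>; in the degenerate case \<open>d 2\<^sup>l = 2\<close> there is a single anchor and any spacing works.\<close>
lemma exists_threshold_spacing:
  assumes "1 \<le> d" "1 \<le> l" "0 < L" "0 < \<gamma>" "real (d * 2^l) - 2 < L / (2 * \<gamma>)"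
  shows "\<exists>D. threshold_blocks d l L D \<and> \<gamma> < L * D / 2"
proof (cases "d * 2^l = 2")
  case True
  then show ?thesis
    using assms by (intro exI[of _ "4 * \<gamma> / L"]) (simp add: threshold_blocks_def)
next
  case False
  define G where "G = real (d * 2^l - 2)"
  have "2 \<le> d * 2^l" using mult_le_mono[OF assms(1) power_increasing[OF assms(2), of 2]] by simp
  then have "0 < d * 2^l - 2" using False by simp
  then have "0 < G" unfolding G_def by (simp only: of_nat_0_less_iff)
  moreover have "G < L / (2 * \<gamma>)" using assms(5) \<open>2 \<le> d * 2^l\<close> by (simp add: G_def of_nat_diff)
  then have "\<gamma> * (2 * G) < L" using assms(4) by (simp add: field_simps)
  ultimately show ?thesis
    using assms unfolding threshold_blocks_def G_def[symmetric]
    by (intro exI[of _ "1 / G"]) (simp add: field_simps)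
qed

lemma sqrt_le_levels_chunk:
  fixes K T :: nat and x :: real
  assumes "1 \<le> K" "K \<le> T" "0 \<le> x" "x \<le> 2 * K"
  shows "sqrt (T * x) / 10 \<le> 3 * real K * sqrt (T div K) / (8 * sqrt 2)"
proof -
  have "T < T div K * K + K" using mod_less_divisor[of K T] div_mult_mod_eq[of T K] assms(1) by linarith
  moreover have "K \<le> T div K * K" using assms(1,2) by (simp add: Suc_le_eq div_greater_zero_iff)
  ultimately have "T \<le> 2 * (T div K * K)" by linarith
  then have "real T \<le> real (2 * (T div K * K))" by (simp only: of_nat_le_iff)
  then have "real T * x \<le> (2 * real (T div K) * real K) * (2 * real K)"
    using assms(3,4) by (intro mult_mono) simp_all
  also have "\<dots> = (2 * real K)^2 * real (T div K)" by (simp add: power2_eq_square)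
  finally have "sqrt (T * x) \<le> 2 * real K * sqrt (T div K)"
    using real_sqrt_le_mono by (fastforce simp: real_sqrt_mult)
  moreover have "sqrt 2 \<le> sqrt ((3 / 2)^2)" by (intro real_sqrt_le_mono) (simp add: power2_eq_square)
  then have "3 * (real K * sqrt (T div K)) / 15 \<le> 3 * (real K * sqrt (T div K)) / (8 * sqrt 2)"
    by (intro divide_left_mono) simp_all
  ultimately show ?thesis by simp
qed

lemma (in threshold_blocks) exists_hard_sequence_sqrt:
  assumes "0 < \<gamma>" "\<gamma> < 1" "\<gamma> < height" "0 \<le> x" "x \<le> 2 * real l" "real d * x \<le> real T"
  shows "\<exists>S. length S = T \<and> (\<forall>p\<in>set S. fst p \<in> {0..1} \<and> snd p \<in> {-1, 1}) \<and>
    1/10 * sqrt (real T * real d * x) \<le> exp_mistakes q S - real (opt_margin threshold_funs \<gamma> S)"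
proof (cases "T = 0")
  case True
  then show ?thesis
    by (intro exI[of _ "[]"]) (simp add: exp_mistakes_def opt_margin_def threshold_funs_def)
next
  case False
  define K where "K = min T (d * l)"
  interpret threshold_adversary d l L D K T \<gamma>
    using False d_pos l_pos assms(1-3) by unfold_locales (auto simp: K_def)
  have "real d * x \<le> 2 * real K"
  proof (cases "K = T")
    case False
    then have "K = d * l" by (simp add: K_def min_def split: if_splits)
    then show ?thesis using mult_left_mono[OF assms(5), of "real d"] by simp
  qed (use assms(6) in simp)
  then have bound: "1/10 * sqrt (real T * real d * x) \<le> 3 * real K * sqrt chunk / (8 * sqrt 2)"
    using sqrt_le_levels_chunk[OF K_pos K_le_T, of "real d * x"] assms(4)
    by (simp add: chunk_def mult.assoc)
  obtain S where S: "length S = T" "\<forall>p\<in>set S. fst p \<in> {0..1} \<and> snd p \<in> {-1, 1}"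
    "3 * real K * sqrt chunk / (8 * sqrt 2) \<le> exp_mistakes q S - real (opt_margin threshold_funs \<gamma> S)"
    using exists_hard_sequence by blast
  show ?thesis by (intro exI[of _ S] conjI S(1,2) order_trans[OF bound S(3)])
qed

text \<open>The adversary needs no assumption on the learner: \<open>q\<close> need not take values in \<open>[0, 1]\<close>.\<close>
lemma lipschitz_class_margin_lower_bound:
  fixes \<gamma> L :: real and d T N :: nat
  assumes N: "N = cover_num (sqrt (32 / pi) * \<gamma> / L)"
    and \<gamma>: "0 < \<gamma>" "\<gamma> < 1/2" and L: "0 < L" and d: "1 \<le> d" "d \<le> N"
    and T: "real d * ln (real N / real d) \<le> real T"
  shows "\<exists>F. (\<forall>f\<in>F. (\<forall>x\<in>{0..1}. \<bar>f x\<bar> \<le> 1) \<and> L-lipschitz_on {0..1} f) \<and> pdim {0..1} F = enat d \<and>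
    (\<forall>q. \<exists>S. length S = T \<and> (\<forall>p\<in>set S. fst p \<in> {0..1} \<and> snd p \<in> {-1, 1}) \<and>
       1/10 * sqrt (real T * real d * ln (real N / real d)) \<le> exp_mistakes q S - real (opt_margin F \<gamma> S))"
proof -
  obtain l where l: "1 \<le> l" "d * 2^l \<le> 2 * N" "ln (real N / real d) \<le> 2 * real l"
    using exists_search_depth[OF d] by blast
  have "real (d * 2^l) \<le> real (2 * N)" using l(2) by (simp only: of_nat_le_iff)
  moreover have "real N - 1 < L / (4 * \<gamma>)" using cover_num_scaled_less[OF \<gamma>(1) L] unfolding N .
  ultimately have "real (d * 2^l) - 2 < L / (2 * \<gamma>)" by simp
  then obtain D where "threshold_blocks d l L D" "\<gamma> < L * D / 2"
    using exists_threshold_spacing d(1) l(1) L \<gamma>(1) by blast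
  then interpret threshold_blocks d l L D by simp
  have "\<gamma> < 1" "\<gamma> < height" "0 \<le> ln (real N / real d)"
    using \<gamma>(2) \<open>\<gamma> < L * D / 2\<close> d by (simp_all add: height_def)
  note hard = exists_hard_sequence_sqrt[OF \<gamma>(1) this l(3) T]
  show ?thesis
  proof (intro exI[of _ threshold_funs] conjI allI pdim_threshold_funs hard)
    show "\<forall>f\<in>threshold_funs. (\<forall>x\<in>{0..1}. \<bar>f x\<bar> \<le> 1) \<and> L-lipschitz_on {0..1} f"
      using abs_threshold_fun_le lipschitz_threshold_fun by (auto simp: threshold_funs_def)
  qed
qed

theorem theorem13:
  shows "\<exists>c>0. \<forall>(\<gamma>::real) (L::real) (d::nat) (T::nat).
    (let N = cover_num (sqrt (32 / pi) * \<gamma> / L) in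
      0 < \<gamma> \<and> \<gamma> < 1/2 \<and> 0 < L \<and> 1 \<le> d \<and> d \<le> N \<and>
      real T \<ge> real d * ln (real N / real d) \<longrightarrow>
      (\<exists>F. (\<forall>f\<in>F. (\<forall>x\<in>{0..1}. \<bar>f x\<bar> \<le> 1) \<and> L-lipschitz_on {0..1} f) \<and>
           pdim {0..1} F = enat d \<and>
           (\<forall>q. learner q \<longrightarrow>
              (\<exists>S. length S = T \<and> (\<forall>p\<in>set S. fst p \<in> {0..1} \<and> snd p \<in> {-1, 1}) \<and>
                   exp_mistakes q S - real (opt_margin F \<gamma> S)
                     \<ge> c * sqrt (real T * real d * ln (real N / real d))))))"
  unfolding Let_def
proof (intro exI[of _ "1/10"] conjI allI impI)
  show "(0::real) < 1/10" by simp
qed (elim conjE, drule (5) lipschitz_class_margin_lower_bound[OF refl], blast)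

end
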